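(* Let $K$ be a field, $S=K[x_1,\ldots,x_n]$, let $I\subset S$ be a monomial ideal and let $u\in S$ be a monomial which is regular on $S/I$. Then $S/I$ is pretty clean if and only if $S/(I,u)$ is pretty clean.
   Context: A prime filtration of $S/I$ (for a monomial ideal $I$) is a chain of monomial ideals $\mathcal F: I=I_0\subset I_1\subset\cdots\subset I_r=S$ such that $I_j/I_{j-1}\cong S/P_j$ (up to a shift of multidegree) for some (monomial) prime ideals $P_j$, $j=1,\ldots,r$. The filtration $\mathcal F$ is called pretty clean if for all $i<j$ with $P_i\subseteq P_j$ one has $P_i=P_j$. The module $S/I$ is called pretty clean if it has a pretty clean filtration. *)

theory Defs
  imports "HOL-Library.Poly_Mapping"
begin

text \<open>The polynomial ring S = K[x_v : v in 'v] over a field K, with a finite type 'v of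
  variables (so n = CARD('v)), is modelled as  the type mpoly below:
  finitely supported maps from exponent vectors to coefficients, with convolution product.\<close>

type_synonym ('v, 'k) mpoly = "('v \<Rightarrow>\<^sub>0 nat) \<Rightarrow>\<^sub>0 'k"

definition is_ideal :: "'a::comm_ring_1 set \<Rightarrow> bool" where
  "is_ideal I \<longleftrightarrow> 0 \<in> I \<and> (\<forall>f\<in>I. \<forall>g\<in>I. f + g \<in> I) \<and> (\<forall>s. \<forall>f\<in>I. s * f \<in> I)"

definition ideal_gen :: "'a::comm_ring_1 set \<Rightarrow> 'a set" where
  "ideal_gen G = \<Inter>{J. is_ideal J \<and> G \<subseteq> J}"

definition is_prime_ideal :: "'a::comm_ring_1 set \<Rightarrow> bool" where
  "is_prime_ideal P \<longleftrightarrow> is_ideal P \<and> P \<noteq> UNIV \<and> (\<forall>f g. f * g \<in> P \<longrightarrow> f \<in> P \<or> g \<in> P)"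

definition monom :: "('v \<Rightarrow>\<^sub>0 nat) \<Rightarrow> ('v, 'k::comm_ring_1) mpoly" where
  "monom a = Poly_Mapping.single a 1"

definition is_monomial :: "('v, 'k::comm_ring_1) mpoly \<Rightarrow> bool" where
  "is_monomial u \<longleftrightarrow> (\<exists>a. u = monom a)"

definition monomial_ideal :: "('v, 'k::comm_ring_1) mpoly set \<Rightarrow> bool" where
  "monomial_ideal I \<longleftrightarrow> (\<exists>G. (\<forall>g\<in>G. is_monomial g) \<and> I = ideal_gen G)"

definition regular_on_quot :: "('v, 'k::comm_ring_1) mpoly \<Rightarrow> ('v, 'k) mpoly set \<Rightarrow> bool" where
  "regular_on_quot u I \<longleftrightarrow> (\<forall>f. u * f \<in> I \<longrightarrow> f \<in> I) \<and> ideal_gen (I \<union> {u}) \<noteq> UNIV"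

text \<open>J/I \<cong> (S/P)(-a) as multigraded S-modules, for some shift a: there is an S-linear map
  phi : S \<rightarrow> J, homogeneous of multidegree a (it sends x^m to a scalar multiple of x^(m+a)),
  which induces an isomorphism S/P \<rightarrow> J/I (surjective modulo I, with preimage of I equal to P).\<close>
definition quot_iso_shift ::
  "('v, 'k::field) mpoly set \<Rightarrow> ('v, 'k) mpoly set \<Rightarrow> ('v, 'k) mpoly set \<Rightarrow> bool" where
  "quot_iso_shift J I P \<longleftrightarrow>
     (\<exists>a (phi :: ('v, 'k) mpoly \<Rightarrow> ('v, 'k) mpoly).
        (\<forall>f g. phi (f + g) = phi f + phi g) \<and>
        (\<forall>s f. phi (s * f) = s * phi f) \<and>
        (\<forall>m. \<exists>c. phi (monom m) = Poly_Mapping.single (m + a) c) \<and>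
        (\<forall>f. phi f \<in> J) \<and>
        (\<forall>h\<in>J. \<exists>f. h - phi f \<in> I) \<and>
        (\<forall>f. phi f \<in> I \<longleftrightarrow> f \<in> P))"

text \<open>A prime filtration I = Is!0 \<subseteq> Is!1 \<subseteq> ... \<subseteq> Is!r = S with Is!j / Is!(j-1) \<cong> S/(Ps!(j-1))
  (up to shift), where the Ps are monomial prime ideals.\<close>
definition prime_filtration ::
  "('v, 'k::field) mpoly set \<Rightarrow> ('v, 'k) mpoly set list \<Rightarrow> ('v, 'k) mpoly set list \<Rightarrow> bool" where
  "prime_filtration I Is Ps \<longleftrightarrow>
     length Is = length Ps + 1 \<and> Is ! 0 = I \<and> Is ! length Ps = UNIV \<and>
     (\<forall>j < length Is. monomial_ideal (Is ! j)) \<and>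
     (\<forall>j < length Ps. is_prime_ideal (Ps ! j) \<and> monomial_ideal (Ps ! j)) \<and>
     (\<forall>j < length Ps. Is ! j \<subseteq> Is ! Suc j \<and> quot_iso_shift (Is ! Suc j) (Is ! j) (Ps ! j))"

definition pretty_clean_filtration ::
  "('v, 'k::field) mpoly set \<Rightarrow> ('v, 'k) mpoly set list \<Rightarrow> ('v, 'k) mpoly set list \<Rightarrow> bool" where
  "pretty_clean_filtration I Is Ps \<longleftrightarrow> prime_filtration I Is Ps \<and>
     (\<forall>i j. i < j \<and> j < length Ps \<and> Ps ! i \<subseteq> Ps ! j \<longrightarrow> Ps ! i = Ps ! j)"

definition pretty_clean :: "('v, 'k::field) mpoly set \<Rightarrow> bool" where
  "pretty_clean I \<longleftrightarrow> (\<exists>Is Ps. pretty_clean_filtration I Is Ps)"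

end

theory Submission
  imports Defs "HOL-Library.Countable"
begin

text \<open>A monomial ideal is determined by its up-closed set of exponents, and a prime filtration of
  \<open>S/I\<close> by a list of steps, each adjoining a monomial \<open>x\<^sup>a\<close> whose colon ideal is generated by
  a set \<open>W\<close> of variables; it is pretty clean iff no \<open>W\<close> is properly contained in a later one.
  If \<open>x\<^sup>b\<close> is regular on \<open>S/I\<close>, colon ideals by powers of \<open>x\<^sup>b\<close> do not change \<open>I\<close>, so a
  filtration of \<open>S/I\<close> may be assumed to avoid the variables of \<open>b\<close>; refining each step along a
  factorisation of \<open>x\<^sup>b\<close> into variables then gives a pretty clean filtration of \<open>S/(I, x\<^sup>b)\<close>.
  Conversely, colon ideals of a filtration of \<open>S/(I, x\<^sup>b)\<close> by \<open>x\<^sup>b / x\<^sub>y\<close> filter \<open>S/(I, x\<^sub>y)\<close>,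
  and discarding \<open>x\<^sub>y\<close> from it leaves a pretty clean filtration of \<open>S/I\<close>.\<close>

type_synonym 'v deg = "'v \<Rightarrow>\<^sub>0 nat"

definition multiples :: "'v deg \<Rightarrow> 'v deg set" where
  "multiples a = {d. \<forall>v. Poly_Mapping.lookup a v \<le> Poly_Mapping.lookup d v}"

definition colon :: "'v deg set \<Rightarrow> 'v deg \<Rightarrow> 'v deg set" where
  "colon A a = {d. a + d \<in> A}"

definition var_multiples :: "'v set \<Rightarrow> 'v deg set" where
  "var_multiples W = {d. \<exists>v\<in>W. 0 < Poly_Mapping.lookup d v}"

definition up_closed :: "'v deg set \<Rightarrow> bool" where
  "up_closed A \<longleftrightarrow> (\<forall>a\<in>A. multiples a \<subseteq> A)"

lemma multiples_self: "a \<in> multiples a"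
  by (simp add: multiples_def)

lemma multiples_trans: "d \<in> multiples a \<Longrightarrow> e \<in> multiples d \<Longrightarrow> e \<in> multiples a"
  by (auto simp: multiples_def intro: order_trans)

lemma add_in_multiples: "a + c \<in> multiples a" "c + a \<in> multiples a"
  by (simp_all add: multiples_def lookup_add)

lemma multiples_add_diff: "d \<in> multiples a \<Longrightarrow> a + (d - a) = d"
  by (rule poly_mapping_eqI) (auto simp: multiples_def lookup_add lookup_minus)

lemma multiples_single: "multiples (Poly_Mapping.single y (Suc 0)) = var_multiples {y}"
  by (auto simp: multiples_def var_multiples_def lookup_single when_def)

lemma var_multiples_Un: "var_multiples (W \<union> W') = var_multiples W \<union> var_multiples W'"
  by (auto simp: var_multiples_def)

lemma var_multiples_subset_iff: "var_multiples W \<subseteq> var_multiples W' \<longleftrightarrow> W \<subseteq> W'"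
proof
  assume sub: "var_multiples W \<subseteq> var_multiples W'"
  show "W \<subseteq> W'"
  proof
    fix t assume "t \<in> W"
    then have "Poly_Mapping.single t (Suc 0) \<in> var_multiples W"
      by (auto simp: var_multiples_def intro!: bexI[of _ t])
    with sub have "Poly_Mapping.single t (Suc 0) \<in> var_multiples W'" ..
    then show "t \<in> W'"
      by (auto simp: var_multiples_def lookup_single when_def split: if_splits)
  qed
qed (auto simp: var_multiples_def)

lemma var_multiples_inject: "var_multiples W = var_multiples W' \<longleftrightarrow> W = W'"
  by (simp only: set_eq_subset var_multiples_subset_iff)

lemma up_closedD: "up_closed A \<Longrightarrow> a \<in> A \<Longrightarrow> d \<in> multiples a \<Longrightarrow> d \<in> A"
  by (auto simp: up_closed_def)

lemma up_closed_multiples: "up_closed (multiples a)"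
  by (auto simp: up_closed_def intro: multiples_trans)

lemma up_closed_Un: "up_closed A \<Longrightarrow> up_closed B \<Longrightarrow> up_closed (A \<union> B)"
  by (auto simp: up_closed_def)

lemma up_closed_UN: "(\<And>a. a \<in> E \<Longrightarrow> up_closed (F a)) \<Longrightarrow> up_closed (\<Union>a\<in>E. F a)"
  by (auto simp: up_closed_def)

lemma up_closed_var_multiples: "up_closed (var_multiples W)"
  by (auto simp: up_closed_def var_multiples_def multiples_def) (meson less_le_trans)

lemma colon_Un: "colon (A \<union> B) a = colon A a \<union> colon B a"
  by (auto simp: colon_def)

lemma colon_colon: "colon (colon A a) c = colon A (a + c)"
  by (simp add: colon_def add.assoc)

lemma colon_multiples: "colon (multiples c) a = multiples (c - a)"
  by (auto simp: colon_def multiples_def lookup_add lookup_minus le_diff_conv add.commute)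

lemma colon_var_multiples:
  "colon (var_multiples W) s = (if Poly_Mapping.keys s \<inter> W = {} then var_multiples W else UNIV)"
  by (auto simp: colon_def var_multiples_def lookup_add in_keys_iff)

lemma colon_multiples_subset_var_multiples:
  "0 < Poly_Mapping.lookup (u - c) y \<Longrightarrow> colon (multiples u) c \<subseteq> var_multiples {y}"
  unfolding colon_multiples by (auto simp: multiples_def var_multiples_def intro: less_le_trans)

lemma up_closed_subset_colon: "up_closed A \<Longrightarrow> A \<subseteq> colon A a"
  by (auto simp: colon_def intro: up_closedD add_in_multiples)

lemma colon_eq_if_divides:
  assumes U: "up_closed U" and b: "colon U b = U"
    and c: "\<forall>v. Poly_Mapping.lookup c v \<le> Poly_Mapping.lookup b v"
  shows "colon U c = U"
proof
  show "colon U c \<subseteq> U"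
  proof
    fix d assume "d \<in> colon U c"
    then have "c + d \<in> U" by (simp add: colon_def)
    moreover have "b + d \<in> multiples (c + d)" using c by (simp add: multiples_def lookup_add)
    ultimately have "b + d \<in> U" using U up_closedD by blast
    then show "d \<in> U" using b by (auto simp: colon_def)
  qed
qed (rule up_closed_subset_colon[OF U])

lemma colon_eq_sum: "colon U b = U \<Longrightarrow> colon U (\<Sum>i<(N::nat). b) = U"
  by (induction N) (simp_all add: colon_def, metis colon_colon colon_def)

subsection \<open>Exponent filtrations\<close>

text \<open>A step \<open>(a, W)\<close> adjoins \<open>x\<^sup>a\<close> to the current ideal \<open>J\<close> under the requirement
  \<open>J : x\<^sup>a = (x\<^sub>v : v \<in> W)\<close>; this is the exponent-level form of a prime filtration.\<close>

fun deg_filtration :: "'v deg set \<Rightarrow> ('v deg \<times> 'v set) list \<Rightarrow> bool" where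
  "deg_filtration A [] \<longleftrightarrow> A = UNIV"
| "deg_filtration A ((a, W) # xs) \<longleftrightarrow>
     colon A a = var_multiples W \<and> deg_filtration (A \<union> multiples a) xs"

definition pretty_clean_steps :: "('v deg \<times> 'v set) list \<Rightarrow> bool" where
  "pretty_clean_steps xs \<longleftrightarrow> sorted_wrt (\<lambda>p q. \<not> snd p \<subset> snd q) xs"

definition deg_pretty_clean :: "'v deg set \<Rightarrow> bool" where
  "deg_pretty_clean U \<longleftrightarrow> (\<exists>xs. deg_filtration U xs \<and> pretty_clean_steps xs)"

lemma deg_filtration_steps_contain_var:
  "deg_filtration A xs \<Longrightarrow> var_multiples {y} \<subseteq> A \<Longrightarrow> (a, W) \<in> set xs \<Longrightarrow> y \<in> W"
proof (induction A xs rule: deg_filtration.induct)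
  case (2 A a' W' xs)
  show ?case
  proof (cases "(a, W) = (a', W')")
    case True
    have "a' + Poly_Mapping.single y 1 \<in> var_multiples {y}" by (simp add: var_multiples_def lookup_add)
    with 2 True have "Poly_Mapping.single y 1 \<in> var_multiples W" by (auto simp: colon_def)
    then show ?thesis by (auto simp: var_multiples_def lookup_single when_def split: if_splits)
  next
    case False
    with 2 show ?thesis by auto
  qed
qed simp

definition colon_steps :: "'v deg \<Rightarrow> ('v deg \<times> 'v set) list \<Rightarrow> ('v deg \<times> 'v set) list" where
  "colon_steps w xs =
     map (\<lambda>(a, W). (a - w, W)) (filter (\<lambda>(a, W). Poly_Mapping.keys (w - a) \<inter> W = {}) xs)"

lemma deg_filtration_colon_steps:
  "deg_filtration A xs \<Longrightarrow> deg_filtration (colon A w) (colon_steps w xs)"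
proof (induction xs arbitrary: A)
  case Nil
  then show ?case by (simp add: colon_steps_def colon_def)
next
  case (Cons p xs)
  obtain a W where p: "p = (a, W)" by (cases p)
  from Cons.prems p have c: "colon A a = var_multiples W" and xs: "deg_filtration (A \<union> multiples a) xs"
    by auto
  have IH: "deg_filtration (colon A w \<union> multiples (a - w)) (colon_steps w xs)"
    using Cons.IH[OF xs] by (simp add: colon_Un colon_multiples)
  have "w + (a - w) = a + (w - a)"
    by (rule poly_mapping_eqI) (simp add: lookup_add lookup_minus)
  then have key: "colon (colon A w) (a - w) = colon (var_multiples W) (w - a)"
    by (simp add: colon_colon flip: c)
  show ?case
  proof (cases "Poly_Mapping.keys (w - a) \<inter> W = {}")
    case True
    then show ?thesis using key IH p by (simp add: colon_steps_def colon_var_multiples)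
  next
    case False
    have "multiples (a - w) \<subseteq> colon A w"
    proof
      fix d assume "d \<in> multiples (a - w)"
      then have d: "(a - w) + (d - (a - w)) = d" by (rule multiples_add_diff)
      have "d - (a - w) \<in> colon (colon A w) (a - w)"
        using key False by (simp add: colon_var_multiples)
      then show "d \<in> colon A w" using d by (simp add: colon_def)
    qed
    then have "colon A w \<union> multiples (a - w) = colon A w" by auto
    then show ?thesis using IH p False by (simp add: colon_steps_def)
  qed
qed

lemma colon_steps_avoids:
  assumes "p \<in> set (colon_steps w xs)" and "\<And>a W. (a, W) \<in> set xs \<Longrightarrow> Poly_Mapping.lookup a v < Poly_Mapping.lookup w v"
  shows "Poly_Mapping.lookup (fst p) v = 0 \<and> v \<notin> snd p"
proof -
  obtain a W where aW: "(a, W) \<in> set xs" "p = (a - w, W)" "Poly_Mapping.keys (w - a) \<inter> W = {}"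
    using assms(1) by (auto simp: colon_steps_def)
  have lt: "Poly_Mapping.lookup a v < Poly_Mapping.lookup w v" using assms(2)[OF aW(1)] .
  then have "v \<in> Poly_Mapping.keys (w - a)" by (simp add: in_keys_iff lookup_minus)
  then show ?thesis using lt aW by (auto simp: lookup_minus)
qed

lemma pretty_clean_steps_colon_steps:
  "pretty_clean_steps xs \<Longrightarrow> pretty_clean_steps (colon_steps w xs)"
  by (auto simp: pretty_clean_steps_def colon_steps_def sorted_wrt_map split_def
      intro: sorted_wrt_filter)

text \<open>\<open>contract_var y A\<close> is the exponent set of the extension of \<open>I \<inter> K[x\<^sub>v : v \<noteq> y]\<close>,
  where \<open>I\<close> has exponent set \<open>A\<close>.\<close>

definition zero_var :: "'v \<Rightarrow> 'v deg \<Rightarrow> 'v deg" where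
  "zero_var y d = Poly_Mapping.update y 0 d"

definition contract_var :: "'v \<Rightarrow> 'v deg set \<Rightarrow> 'v deg set" where
  "contract_var y A = {d. zero_var y d \<in> A}"

definition contract_var_steps :: "'v \<Rightarrow> ('v deg \<times> 'v set) list \<Rightarrow> ('v deg \<times> 'v set) list" where
  "contract_var_steps y xs =
     map (\<lambda>(a, W). (a, W - {y})) (filter (\<lambda>(a, W). Poly_Mapping.lookup a y = 0) xs)"

lemma lookup_zero_var: "Poly_Mapping.lookup (zero_var y d) v = (if v = y then 0 else Poly_Mapping.lookup d v)"
  by (simp add: zero_var_def lookup_update)

lemma contract_var_Un: "contract_var y (A \<union> B) = contract_var y A \<union> contract_var y B"
  by (auto simp: contract_var_def)

lemma contract_var_multiples:
  "contract_var y (multiples a) = (if Poly_Mapping.lookup a y = 0 then multiples a else {})"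
  by (auto simp: contract_var_def multiples_def lookup_zero_var) (metis zero_le)

lemma contract_var_colon:
  assumes "Poly_Mapping.lookup a y = 0"
  shows "colon (contract_var y A) a = contract_var y (colon A a)"
proof -
  have "zero_var y (a + d) = a + zero_var y d" for d
    by (rule poly_mapping_eqI) (simp add: lookup_zero_var lookup_add assms)
  then show ?thesis by (simp add: colon_def contract_var_def)
qed

lemma contract_var_var_multiples: "contract_var y (var_multiples W) = var_multiples (W - {y})"
  by (auto simp: contract_var_def var_multiples_def lookup_zero_var split: if_splits)

lemma deg_filtration_contract_var_steps:
  "deg_filtration A xs \<Longrightarrow> deg_filtration (contract_var y A) (contract_var_steps y xs)"
proof (induction xs arbitrary: A)
  case Nil
  then show ?case by (simp add: contract_var_steps_def contract_var_def)
next
  case (Cons p xs)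
  obtain a W where p: "p = (a, W)" by (cases p)
  from Cons.prems p have c: "colon A a = var_multiples W" and xs: "deg_filtration (A \<union> multiples a) xs"
    by auto
  from Cons.IH[OF xs] have IH: "deg_filtration (contract_var y A \<union> contract_var y (multiples a))
      (contract_var_steps y xs)"
    by (simp add: contract_var_Un)
  show ?case
  proof (cases "Poly_Mapping.lookup a y = 0")
    case True
    then show ?thesis using IH p c
      by (simp add: contract_var_steps_def contract_var_multiples contract_var_colon
          contract_var_var_multiples)
  next
    case False
    then show ?thesis using IH p by (simp add: contract_var_steps_def contract_var_multiples)
  qed
qed

lemma pretty_clean_steps_contract_var_steps:
  assumes "pretty_clean_steps xs" "\<forall>p\<in>set xs. y \<in> snd p"
  shows "pretty_clean_steps (contract_var_steps y xs)"
proof -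
  have "\<not> W - {y} \<subset> W' - {y}" if "\<not> W \<subset> W'" "y \<in> W" "y \<in> W'" for W W' :: "'a set"
    using that by blast
  then show ?thesis using assms
    by (auto simp: pretty_clean_steps_def contract_var_steps_def sorted_wrt_map split_def
        intro!: sorted_wrt_filter elim!: sorted_wrt_mono_rel[rotated])
qed

lemma contract_var_eq_self:
  assumes U: "up_closed U" and reg: "colon U (Poly_Mapping.single y (Suc 0)) = U"
  shows "contract_var y U = U"
proof
  show "contract_var y U \<subseteq> U"
    using U by (auto simp: contract_var_def multiples_def lookup_zero_var intro: up_closedD)
  show "U \<subseteq> contract_var y U"
  proof
    fix d assume d: "d \<in> U"
    define k where "k = Poly_Mapping.lookup d y"
    have "(\<Sum>i<k. Poly_Mapping.single y (Suc 0)) = Poly_Mapping.single y k"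
      by (rule poly_mapping_eqI) (simp add: lookup_sum lookup_single when_def)
    then have reg_k: "colon U (Poly_Mapping.single y k) = U" using colon_eq_sum[OF reg] by metis
    have "d = Poly_Mapping.single y k + zero_var y d"
      by (rule poly_mapping_eqI) (simp add: lookup_add lookup_zero_var lookup_single when_def k_def)
    then have "zero_var y d \<in> colon U (Poly_Mapping.single y k)" using d by (simp add: colon_def)
    then show "d \<in> contract_var y U" using reg_k by (simp add: contract_var_def)
  qed
qed

lemma deg_pretty_clean_remove_regular:
  assumes U: "up_closed U" and reg: "colon U b = U" and b0: "b \<noteq> 0"
    and pc: "deg_pretty_clean (U \<union> multiples b)"
  shows "deg_pretty_clean U"
proof -
  obtain y where y: "Poly_Mapping.lookup b y \<noteq> 0"
    using b0 by (metis lookup_zero poly_mapping_eqI)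
  define e where "e = Poly_Mapping.single y (Suc 0)"
  define b' where "b' = b - e"
  have "colon U b' = U"
    by (rule colon_eq_if_divides[OF U reg]) (simp add: b'_def lookup_minus)
  moreover have "b - b' = e"
    by (rule poly_mapping_eqI) (use y in \<open>auto simp: b'_def e_def lookup_minus lookup_single when_def\<close>)
  ultimately have col: "colon (U \<union> multiples b) b' = U \<union> var_multiples {y}"
    by (simp add: colon_Un colon_multiples e_def multiples_single)
  obtain xs where xs: "deg_filtration (U \<union> multiples b) xs" "pretty_clean_steps xs"
    using pc unfolding deg_pretty_clean_def by blast
  define xs' where "xs' = colon_steps b' xs"
  have f': "deg_filtration (U \<union> var_multiples {y}) xs'"
    using deg_filtration_colon_steps[OF xs(1), of b'] col by (simp add: xs'_def)
  have pc': "pretty_clean_steps xs'"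
    using pretty_clean_steps_colon_steps[OF xs(2)] by (simp add: xs'_def)
  have "\<forall>p\<in>set xs'. y \<in> snd p"
    using deg_filtration_steps_contain_var[OF f'] by fastforce
  then have pc'': "pretty_clean_steps (contract_var_steps y xs')"
    using pretty_clean_steps_contract_var_steps[OF pc'] by blast
  have "colon U e = U"
    by (rule colon_eq_if_divides[OF U reg]) (use y in \<open>auto simp: e_def lookup_single when_def\<close>)
  then have "contract_var y U = U" unfolding e_def by (rule contract_var_eq_self[OF U])
  then have "contract_var y (U \<union> var_multiples {y}) = U"
    by (simp add: contract_var_Un contract_var_var_multiples) (simp add: var_multiples_def)
  then show ?thesis
    using deg_filtration_contract_var_steps[OF f', of y] pc'' unfolding deg_pretty_clean_def by auto
qed

subsection \<open>Adjoining a regular monomial\<close>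

definition deg_of_list :: "'v list \<Rightarrow> 'v deg" where
  "deg_of_list ys = sum_list (map (\<lambda>y. Poly_Mapping.single y 1) ys)"

lemma deg_of_list_simps [simp]:
  "deg_of_list [] = 0"
  "deg_of_list (y # ys) = Poly_Mapping.single y 1 + deg_of_list ys"
  by (simp_all add: deg_of_list_def)

lemma keys_deg_of_list: "Poly_Mapping.keys (deg_of_list ys) \<subseteq> set ys"
proof (induction ys)
  case (Cons y ys)
  then show ?case using keys_add[of "Poly_Mapping.single y (1::nat)" "deg_of_list ys"] by auto
qed simp

lemma ex_deg_of_list: "\<exists>ys. deg_of_list ys = d \<and> set ys \<subseteq> Poly_Mapping.keys d"
proof (induction d rule: update_induct)
  case const
  then show ?case by (rule exI[of _ "[]"]) simp
next
  case (update f a b)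
  then obtain ys where ys: "deg_of_list ys = f" "set ys \<subseteq> Poly_Mapping.keys f" by blast
  have "deg_of_list (replicate b a) = Poly_Mapping.single a b"
    by (induction b) (simp_all add: single_add[symmetric])
  moreover have "Poly_Mapping.update a b f = Poly_Mapping.single a b + f"
    using update by (intro poly_mapping_eqI)
      (auto simp: lookup_update lookup_add lookup_single when_def in_keys_iff)
  moreover have "Poly_Mapping.keys (Poly_Mapping.update a b f) = insert a (Poly_Mapping.keys f)"
    using update by (simp add: keys_update)
  ultimately have "deg_of_list (replicate b a @ ys) = Poly_Mapping.update a b f"
    "set (replicate b a @ ys) \<subseteq> Poly_Mapping.keys (Poly_Mapping.update a b f)"
    using ys by (auto simp: deg_of_list_def)
  then show ?case by blast
qed

text \<open>Along a factorisation \<open>x\<^sup>b = x\<^sub>1 \<cdots> x\<^sub>m\<close> into variables, a step \<open>(a, W)\<close> is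
  replaced by the steps \<open>(x\<^sup>a x\<^sub>k\<^sub>+\<^sub>1 \<cdots> x\<^sub>m, W \<union> {x\<^sub>k})\<close> for \<open>k = 1, \<dots>, m\<close>.  This mirrors
  tensoring with the filtration \<open>(x\<^sub>1 \<cdots> x\<^sub>m) \<subset> (x\<^sub>2 \<cdots> x\<^sub>m) \<subset> \<cdots> \<subset> S\<close> of \<open>S/(x\<^sup>b)\<close>.\<close>

fun block_steps :: "'v deg \<Rightarrow> 'v set \<Rightarrow> 'v list \<Rightarrow> ('v deg \<times> 'v set) list" where
  "block_steps a W [] = []"
| "block_steps a W (y # ys) = (a + deg_of_list ys, insert y W) # block_steps a W ys"

fun extend_steps :: "'v list \<Rightarrow> ('v deg \<times> 'v set) list \<Rightarrow> ('v deg \<times> 'v set) list" where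
  "extend_steps ys [] = []"
| "extend_steps ys ((a, W) # xs) = block_steps a W ys @ extend_steps ys xs"

lemma deg_filtration_block_steps:
  assumes c: "colon A a = var_multiples W"
    and free: "\<forall>v\<in>set ys. Poly_Mapping.lookup a v = 0 \<and> v \<notin> W"
    and le: "\<forall>v. Poly_Mapping.lookup (deg_of_list ys) v \<le> Poly_Mapping.lookup u v"
    and rest: "deg_filtration (A \<union> multiples a \<union> multiples u) xs"
  shows "deg_filtration (A \<union> multiples u \<union> multiples (a + deg_of_list ys)) (block_steps a W ys @ xs)"
  using free le
proof (induction ys)
  case Nil
  then show ?case using rest by (simp add: Un_ac)
next
  case (Cons y ys)
  define s where "s = deg_of_list ys"
  define e where "e = Poly_Mapping.single y (1::nat)"
  have ay: "Poly_Mapping.lookup a y = 0" "y \<notin> W" using Cons.prems by auto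
  have u: "Poly_Mapping.lookup (e + s) v \<le> Poly_Mapping.lookup u v" for v
    using Cons.prems(2) by (simp add: e_def s_def)
  have "\<forall>v. Poly_Mapping.lookup s v \<le> Poly_Mapping.lookup u v"
    using u by (simp add: lookup_add) (meson add_leD2)
  then have IH: "deg_filtration (A \<union> multiples u \<union> multiples (a + s)) (block_steps a W ys @ xs)"
    using Cons.IH Cons.prems by (simp add: s_def)
  have "Poly_Mapping.keys s \<inter> W = {}" using keys_deg_of_list[of ys] Cons.prems unfolding s_def by auto
  then have c1: "colon A (a + s) = var_multiples W"
    using c by (simp add: colon_var_multiples flip: colon_colon)
  have "(a + (e + s)) - (a + s) = e" by (rule poly_mapping_eqI) (simp add: lookup_add lookup_minus)
  then have c2: "colon (multiples (a + (e + s))) (a + s) = var_multiples {y}"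
    by (simp add: colon_multiples e_def multiples_single)
  have "0 < Poly_Mapping.lookup (u - (a + s)) y"
    using u[of y] by (simp add: e_def lookup_minus lookup_add ay)
  then have c3: "colon (multiples u) (a + s) \<subseteq> var_multiples {y}"
    by (rule colon_multiples_subset_var_multiples)
  have "colon (A \<union> multiples u \<union> multiples (a + (e + s))) (a + s) = var_multiples W \<union> var_multiples {y}"
    unfolding colon_Un c1 c2 by (simp add: Un_assoc Un_absorb1[OF c3])
  then have col: "colon (A \<union> multiples u \<union> multiples (a + (e + s))) (a + s) = var_multiples (insert y W)"
    using var_multiples_Un[of "{y}" W] by (simp add: Un_ac)
  have "a + (e + s) = (a + s) + e" by (simp add: ac_simps)
  then have "multiples (a + (e + s)) \<subseteq> multiples (a + s)"
    using add_in_multiples(1)[of "a + s" e] by (auto intro: multiples_trans)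
  then have "A \<union> multiples u \<union> multiples (a + (e + s)) \<union> multiples (a + s)
      = A \<union> multiples u \<union> multiples (a + s)" by auto
  then show ?case using col IH by (simp add: e_def s_def)
qed

lemma deg_filtration_extend_steps:
  "deg_filtration A xs \<Longrightarrow> (\<forall>p\<in>set xs. \<forall>v\<in>set ys. Poly_Mapping.lookup (fst p) v = 0 \<and> v \<notin> snd p)
   \<Longrightarrow> deg_filtration (A \<union> multiples (deg_of_list ys)) (extend_steps ys xs)"
proof (induction xs arbitrary: A)
  case (Cons p xs)
  obtain a W where p: "p = (a, W)" by (cases p)
  from Cons.prems p have c: "colon A a = var_multiples W" and xs: "deg_filtration (A \<union> multiples a) xs"
    by auto
  have "deg_filtration (A \<union> multiples a \<union> multiples (deg_of_list ys)) (extend_steps ys xs)"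
    using Cons.IH[OF xs] Cons.prems by auto
  then have "deg_filtration (A \<union> multiples (deg_of_list ys) \<union> multiples (a + deg_of_list ys))
      (block_steps a W ys @ extend_steps ys xs)"
    using Cons.prems p by (intro deg_filtration_block_steps[OF c]) auto
  moreover have "multiples (a + deg_of_list ys) \<subseteq> multiples (deg_of_list ys)"
    using add_in_multiples(2) multiples_trans by blast
  ultimately show ?case using p by (simp add: sup.absorb1 sup_assoc)
qed simp

lemma set_block_steps: "q \<in> set (block_steps a W ys) \<Longrightarrow> \<exists>y\<in>set ys. snd q = insert y W"
  by (induction ys) auto

lemma set_extend_steps:
  "q \<in> set (extend_steps ys xs) \<Longrightarrow> \<exists>p\<in>set xs. \<exists>y\<in>set ys. snd q = insert y (snd p)"
  by (induction ys xs rule: extend_steps.induct) (auto dest: set_block_steps)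

lemma pretty_clean_steps_extend_steps:
  "pretty_clean_steps xs \<Longrightarrow> (\<forall>p\<in>set xs. \<forall>v\<in>set ys. v \<notin> snd p)
   \<Longrightarrow> pretty_clean_steps (extend_steps ys xs)"
proof (induction ys xs rule: extend_steps.induct)
  case (2 ys a W xs)
  have no_psubset: "\<not> insert y W \<subset> insert y' W'"
    if "\<not> W \<subset> W'" "y \<notin> W" "y \<notin> W'" "y' \<notin> W" "y' \<notin> W'" for y y' and W' :: "'a set"
    using that by blast
  have "sorted_wrt (\<lambda>p q. \<not> snd p \<subset> snd q) (block_steps a W ys)"
    by (rule sorted_wrt_mono_rel[of _ "\<lambda>_ _. True"]) (use 2(3) in \<open>auto dest!: set_block_steps\<close>)
  moreover have "\<not> snd p \<subset> snd q"
    if p: "p \<in> set (block_steps a W ys)" and q: "q \<in> set (extend_steps ys xs)" for p q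
  proof -
    obtain y where y: "y \<in> set ys" "snd p = insert y W" using set_block_steps[OF p] by blast
    obtain p' y' where p': "p' \<in> set xs" "y' \<in> set ys" "snd q = insert y' (snd p')"
      using set_extend_steps[OF q] by blast
    have "\<not> W \<subset> snd p'" using 2(2) p'(1) by (simp add: pretty_clean_steps_def)
    moreover have "y \<notin> W" "y \<notin> snd p'" "y' \<notin> W" "y' \<notin> snd p'" using 2(3) y p' by auto
    ultimately show ?thesis using no_psubset y(2) p'(3) by simp
  qed
  ultimately show ?case using 2
    by (auto simp: pretty_clean_steps_def sorted_wrt_append)
qed simp

text \<open>\<open>N\<close> is chosen so that \<open>x\<^sup>N\<^sup>b\<close> exceeds every step in the variables of \<open>b\<close>; the colon by
  \<open>x\<^sup>N\<^sup>b\<close> leaves \<open>U\<close> unchanged but removes all steps involving them.\<close>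

lemma deg_pretty_clean_add_regular:
  assumes U: "up_closed U" and reg: "colon U b = U" and pc: "deg_pretty_clean U"
  shows "deg_pretty_clean (U \<union> multiples b)"
proof -
  obtain xs where xs: "deg_filtration U xs" "pretty_clean_steps xs"
    using pc unfolding deg_pretty_clean_def by blast
  define S where "S = (\<Sum>p\<leftarrow>xs. \<Sum>v\<in>Poly_Mapping.keys b. Poly_Mapping.lookup (fst p) v)"
  define N where "N = Suc S"
  define w where "w = (\<Sum>i<N. b)"
  define xs' where "xs' = colon_steps w xs"
  have f': "deg_filtration U xs'"
    using deg_filtration_colon_steps[OF xs(1), of w] colon_eq_sum[OF reg] by (simp add: xs'_def w_def)
  have pc': "pretty_clean_steps xs'"
    using pretty_clean_steps_colon_steps[OF xs(2)] by (simp add: xs'_def)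
  have below: "Poly_Mapping.lookup a v < Poly_Mapping.lookup w v"
    if "(a, W) \<in> set xs" and v: "v \<in> Poly_Mapping.keys b" for a W v
  proof -
    have "Poly_Mapping.lookup a v \<le> (\<Sum>v\<in>Poly_Mapping.keys b. Poly_Mapping.lookup a v)"
      by (rule member_le_sum) (use v in auto)
    also have "\<dots> \<le> S"
      unfolding S_def by (rule member_le_sum_list) (use that(1) in force)+
    also have "\<dots> < N" by (simp add: N_def)
    also have "\<dots> \<le> N * Poly_Mapping.lookup b v"
      using v by (simp add: in_keys_iff)
    finally show ?thesis by (simp add: w_def lookup_sum)
  qed
  have free: "Poly_Mapping.lookup (fst p) v = 0 \<and> v \<notin> snd p"
    if p: "p \<in> set xs'" and v: "v \<in> Poly_Mapping.keys b" for p v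
  proof -
    from p have "p \<in> set (colon_steps w xs)" by (simp add: xs'_def)
    then show ?thesis by (rule colon_steps_avoids) (rule below[OF _ v])
  qed
  obtain ys where ys: "deg_of_list ys = b" "set ys \<subseteq> Poly_Mapping.keys b"
    using ex_deg_of_list[of b] by blast
  show ?thesis
    unfolding deg_pretty_clean_def
    using deg_filtration_extend_steps[OF f', of ys] pretty_clean_steps_extend_steps[OF pc', of ys]
      free ys by blast
qed

subsection \<open>Monomial ideals\<close>

definition mono_ideal :: "'v deg set \<Rightarrow> ('v, 'k::zero) mpoly set" where
  "mono_ideal U = {f. Poly_Mapping.keys f \<subseteq> U}"

lemma poly_mapping_expansion:
  "f = (\<Sum>d\<in>Poly_Mapping.keys f. Poly_Mapping.single d (Poly_Mapping.lookup f d))"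
  by (rule poly_mapping_eqI) (simp add: lookup_sum lookup_single when_def sum.delta in_keys_iff)

lemma is_ideal_sum: "is_ideal J \<Longrightarrow> (\<And>i. i \<in> A \<Longrightarrow> h i \<in> J) \<Longrightarrow> sum h A \<in> J"
  by (induction A rule: infinite_finite_induct) (simp_all add: is_ideal_def)

lemma is_ideal_mult: "is_ideal J \<Longrightarrow> f \<in> J \<Longrightarrow> s * f \<in> J"
  by (simp add: is_ideal_def)

lemma is_ideal_ideal_gen: "is_ideal (ideal_gen G)"
  unfolding ideal_gen_def is_ideal_def by auto

lemma ideal_gen_superset: "G \<subseteq> ideal_gen G"
  unfolding ideal_gen_def by auto

lemma ideal_gen_least: "is_ideal J \<Longrightarrow> G \<subseteq> J \<Longrightarrow> ideal_gen G \<subseteq> J"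
  unfolding ideal_gen_def by auto

lemma keys_monom [simp]: "Poly_Mapping.keys (monom d :: ('v, 'k::comm_ring_1) mpoly) = {d}"
  by (simp add: monom_def)

lemma monom_mult: "monom a * monom b = (monom (a + b) :: ('v, 'k::comm_ring_1) mpoly)"
  by (simp add: monom_def mult_single)

lemma monom_mult_diff: "d \<in> multiples a \<Longrightarrow> monom (d - a) * monom a = (monom d :: ('v, 'k::comm_ring_1) mpoly)"
  by (simp add: monom_mult multiples_add_diff add.commute)

lemma keys_single_mult:
  assumes "c \<noteq> 0"
  shows "Poly_Mapping.keys (Poly_Mapping.single a c * f) = (+) a ` Poly_Mapping.keys (f :: ('v, 'k::idom) mpoly)"
proof -
  have "Poly_Mapping.single a c * f
      = (\<Sum>d\<in>Poly_Mapping.keys f. Poly_Mapping.single (a + d) (c * Poly_Mapping.lookup f d))"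
    by (subst poly_mapping_expansion[of f]) (simp add: sum_distrib_left mult_single)
  then have "Poly_Mapping.lookup (Poly_Mapping.single a c * f) (a + d) = c * Poly_Mapping.lookup f d" for d
    by (simp add: lookup_sum lookup_single when_def sum.delta in_keys_iff)
  then show ?thesis
    using keys_mult[of "Poly_Mapping.single a c" f] assms by (force simp: in_keys_iff)
qed

lemma monom_in_mono_ideal_iff [simp]:
  "(monom d :: ('v, 'k::comm_ring_1) mpoly) \<in> mono_ideal U \<longleftrightarrow> d \<in> U"
  by (simp add: mono_ideal_def monom_def)

lemma mono_ideal_subset_iff:
  "(mono_ideal A :: ('v, 'k::comm_ring_1) mpoly set) \<subseteq> mono_ideal B \<longleftrightarrow> A \<subseteq> B"
proof
  assume sub: "(mono_ideal A :: ('v, 'k) mpoly set) \<subseteq> mono_ideal B"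
  show "A \<subseteq> B"
  proof
    fix d assume "d \<in> A"
    then have "(monom d :: ('v, 'k) mpoly) \<in> mono_ideal A" by simp
    with sub have "(monom d :: ('v, 'k) mpoly) \<in> mono_ideal B" by (rule subsetD)
    then show "d \<in> B" by simp
  qed
qed (auto simp: mono_ideal_def)

lemma mono_ideal_inject:
  "(mono_ideal A :: ('v, 'k::comm_ring_1) mpoly set) = mono_ideal B \<longleftrightarrow> A = B"
  by (simp only: set_eq_subset mono_ideal_subset_iff)

lemma mono_ideal_UNIV: "mono_ideal UNIV = UNIV"
  by (simp add: mono_ideal_def)

lemma is_ideal_mono_ideal:
  assumes U: "up_closed U"
  shows "is_ideal (mono_ideal U :: ('v, 'k::comm_ring_1) mpoly set)"
proof -
  have "Poly_Mapping.keys (f + g) \<subseteq> U"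
    if "Poly_Mapping.keys f \<subseteq> U" "Poly_Mapping.keys g \<subseteq> U" for f g :: "('v, 'k) mpoly"
    using keys_add[of f g] that by blast
  moreover have "Poly_Mapping.keys (s * f) \<subseteq> U" if "Poly_Mapping.keys f \<subseteq> U" for s f :: "('v, 'k) mpoly"
  proof
    fix d assume "d \<in> Poly_Mapping.keys (s * f)"
    then obtain x y where "d = x + y" "y \<in> Poly_Mapping.keys f" using keys_mult[of s f] by blast
    then show "d \<in> U" using that U up_closedD add_in_multiples(2) by blast
  qed
  ultimately show ?thesis by (simp add: is_ideal_def mono_ideal_def)
qed

lemma mono_ideal_subsetI:
  assumes J: "is_ideal J" and U: "\<And>d. d \<in> U \<Longrightarrow> monom d \<in> J"
  shows "mono_ideal U \<subseteq> (J :: ('v, 'k::comm_ring_1) mpoly set)"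
proof
  fix f :: "('v, 'k) mpoly" assume f: "f \<in> mono_ideal U"
  have "(\<Sum>d\<in>Poly_Mapping.keys f. Poly_Mapping.single d (Poly_Mapping.lookup f d)) \<in> J"
  proof (rule is_ideal_sum[OF J])
    fix d assume "d \<in> Poly_Mapping.keys f"
    then have "monom d \<in> J" using U f by (auto simp: mono_ideal_def)
    then have "Poly_Mapping.single 0 (Poly_Mapping.lookup f d) * monom d \<in> J" by (rule is_ideal_mult[OF J])
    then show "Poly_Mapping.single d (Poly_Mapping.lookup f d) \<in> J" by (simp add: monom_def mult_single)
  qed
  then show "f \<in> J" by (simp flip: poly_mapping_expansion)
qed

lemma ideal_gen_monoms:
  assumes U: "up_closed U"
  shows "ideal_gen (monom ` U) = (mono_ideal U :: ('v, 'k::comm_ring_1) mpoly set)"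
proof
  show "ideal_gen (monom ` U) \<subseteq> (mono_ideal U :: ('v, 'k) mpoly set)"
    by (rule ideal_gen_least[OF is_ideal_mono_ideal[OF U]]) auto
  show "mono_ideal U \<subseteq> ideal_gen (monom ` U :: ('v, 'k) mpoly set)"
    by (rule mono_ideal_subsetI[OF is_ideal_ideal_gen]) (use ideal_gen_superset in blast)
qed

lemma monomial_ideal_iff:
  "monomial_ideal (J :: ('v, 'k::comm_ring_1) mpoly set) \<longleftrightarrow> (\<exists>U. up_closed U \<and> J = mono_ideal U)"
proof
  assume "monomial_ideal J"
  then obtain G where G: "\<forall>g\<in>G. is_monomial g" "J = ideal_gen G"
    by (auto simp: monomial_ideal_def)
  define E where "E = {a. monom a \<in> G}"
  have "G = monom ` E" using G(1) by (auto simp: E_def is_monomial_def)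
  then have J: "J = ideal_gen (monom ` E)" using G(2) by simp
  define U where "U = (\<Union>a\<in>E. multiples a)"
  have U: "up_closed U" unfolding U_def by (rule up_closed_UN) (rule up_closed_multiples)
  have "E \<subseteq> U" unfolding U_def using multiples_self by blast
  then have "J \<subseteq> mono_ideal U"
    unfolding J by (intro ideal_gen_least[OF is_ideal_mono_ideal[OF U]]) auto
  moreover have "mono_ideal U \<subseteq> J"
  proof (rule mono_ideal_subsetI)
    show "is_ideal J" unfolding J by (rule is_ideal_ideal_gen)
    fix d assume "d \<in> U"
    then obtain a where a: "a \<in> E" "d \<in> multiples a" by (auto simp: U_def)
    have "monom a \<in> J" using a(1) ideal_gen_superset unfolding J by blast
    then have "monom (d - a) * monom a \<in> J" using is_ideal_mult[OF is_ideal_ideal_gen] J by blast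
    then show "monom d \<in> J" by (simp only: monom_mult_diff[OF a(2)])
  qed
  ultimately show "\<exists>U. up_closed U \<and> J = mono_ideal U" using U by blast
next
  assume "\<exists>U. up_closed U \<and> J = mono_ideal U"
  then obtain U where "up_closed U" "J = mono_ideal U" by blast
  then have "J = ideal_gen (monom ` U)" by (simp add: ideal_gen_monoms)
  moreover have "\<forall>g\<in>monom ` U. is_monomial g" by (auto simp: is_monomial_def)
  ultimately show "monomial_ideal J" unfolding monomial_ideal_def by blast
qed

lemma ideal_gen_insert_monom:
  assumes U: "up_closed U"
  shows "ideal_gen (mono_ideal U \<union> {monom b}) = (mono_ideal (U \<union> multiples b) :: ('v, 'k::comm_ring_1) mpoly set)"
    (is "?J = _")
proof (rule subset_antisym)
  have "mono_ideal U \<union> {monom b} \<subseteq> (mono_ideal (U \<union> multiples b) :: ('v, 'k) mpoly set)"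
    using multiples_self[of b] by (auto simp: mono_ideal_def)
  then show "?J \<subseteq> mono_ideal (U \<union> multiples b)"
    by (rule ideal_gen_least[OF is_ideal_mono_ideal[OF up_closed_Un[OF U up_closed_multiples]]])
  have gens: "mono_ideal U \<union> {monom b} \<subseteq> ?J" by (rule ideal_gen_superset)
  show "mono_ideal (U \<union> multiples b) \<subseteq> ?J"
  proof (rule mono_ideal_subsetI[OF is_ideal_ideal_gen])
    fix d assume "d \<in> U \<union> multiples b"
    then show "monom d \<in> ?J"
    proof
      assume "d \<in> U"
      then show ?thesis using gens by auto
    next
      assume d: "d \<in> multiples b"
      have "monom b \<in> ?J" using gens by auto
      then have "monom (d - b) * monom b \<in> ?J" by (rule is_ideal_mult[OF is_ideal_ideal_gen])
      then show ?thesis by (simp only: monom_mult_diff[OF d])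
    qed
  qed
qed

subsection \<open>Quotients of consecutive monomial ideals\<close>

definition restrict_keys :: "'a set \<Rightarrow> ('a \<Rightarrow>\<^sub>0 'b::zero) \<Rightarrow> 'a \<Rightarrow>\<^sub>0 'b" where
  "restrict_keys S f = Abs_poly_mapping (\<lambda>d. if d \<in> S then Poly_Mapping.lookup f d else 0)"

lemma lookup_restrict_keys:
  "Poly_Mapping.lookup (restrict_keys S f) d = (if d \<in> S then Poly_Mapping.lookup f d else 0)"
proof -
  have "{d. (if d \<in> S then Poly_Mapping.lookup f d else 0) \<noteq> 0} \<subseteq> Poly_Mapping.keys f"
    by (auto simp: in_keys_iff)
  then have "finite {d. (if d \<in> S then Poly_Mapping.lookup f d else 0) \<noteq> 0}"
    by (rule finite_subset) simp
  then have "Poly_Mapping.lookup (restrict_keys S f) = (\<lambda>d. if d \<in> S then Poly_Mapping.lookup f d else 0)"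
    unfolding restrict_keys_def by (rule Abs_poly_mapping_inverse[OF CollectI])
  then show ?thesis by simp
qed

lemma keys_restrict_keys: "Poly_Mapping.keys (restrict_keys S f) = Poly_Mapping.keys f \<inter> S"
  by (auto simp: in_keys_iff lookup_restrict_keys split: if_splits)

lemma restrict_keys_add_compl:
  "restrict_keys S f + restrict_keys (- S) f = (f :: 'a \<Rightarrow>\<^sub>0 'b::monoid_add)"
  by (rule poly_mapping_eqI) (simp add: lookup_add lookup_restrict_keys)

lemma monom_dvdI:
  assumes "Poly_Mapping.keys g \<subseteq> multiples a"
  shows "\<exists>f. g = monom a * (f :: ('v, 'k::comm_ring_1) mpoly)"
proof
  have "monom a * (\<Sum>d\<in>Poly_Mapping.keys g. Poly_Mapping.single (d - a) (Poly_Mapping.lookup g d))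
      = (\<Sum>d\<in>Poly_Mapping.keys g. Poly_Mapping.single d (Poly_Mapping.lookup g d))"
    unfolding sum_distrib_left
    by (rule sum.cong) (use assms in \<open>auto simp: monom_def mult_single multiples_add_diff\<close>)
  then show "g = monom a * (\<Sum>d\<in>Poly_Mapping.keys g. Poly_Mapping.single (d - a) (Poly_Mapping.lookup g d))"
    by (simp flip: poly_mapping_expansion)
qed

text \<open>Multiplication by \<open>x\<^sup>a\<close> induces \<open>S/(I : x\<^sup>a) \<cong> (I, x\<^sup>a)/I\<close>, shifted by \<open>a\<close>.\<close>

lemma quot_iso_shift_adjoin:
  assumes A: "up_closed A"
  shows "quot_iso_shift (mono_ideal (A \<union> multiples a)) (mono_ideal A)
    (mono_ideal (colon A a) :: ('v, 'k::field) mpoly set)"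
  unfolding quot_iso_shift_def
proof (rule exI[of _ a], rule exI[of _ "(*) (monom a)"], intro conjI allI ballI)
  fix f g s :: "('v, 'k) mpoly" and m
  show "monom a * (f + g) = monom a * f + monom a * g" by (rule distrib_left)
  show "monom a * (s * f) = s * (monom a * f)" by (rule mult.left_commute)
  show "\<exists>c. monom a * monom m = Poly_Mapping.single (m + a) c"
    by (rule exI[of _ 1]) (simp add: monom_def mult_single add.commute)
  show "monom a * f \<in> mono_ideal (A \<union> multiples a)"
    by (auto simp: mono_ideal_def monom_def keys_single_mult add_in_multiples)
  show "monom a * f \<in> mono_ideal A \<longleftrightarrow> f \<in> mono_ideal (colon A a)"
    by (auto simp: mono_ideal_def monom_def keys_single_mult colon_def)
next
  fix h :: "('v, 'k) mpoly" assume h: "h \<in> mono_ideal (A \<union> multiples a)"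
  obtain f where f: "restrict_keys (multiples a) h = monom a * f"
    using monom_dvdI[of "restrict_keys (multiples a) h" a] by (auto simp: keys_restrict_keys)
  have "h - monom a * f = restrict_keys (- multiples a) h"
    using restrict_keys_add_compl[of "multiples a" h] f by (simp add: algebra_simps)
  also have "\<dots> \<in> mono_ideal A"
    using h by (auto simp: mono_ideal_def keys_restrict_keys)
  finally show "\<exists>f. h - monom a * f \<in> mono_ideal A" by blast
qed

text \<open>Conversely, a shifted isomorphism \<open>S/Q \<cong> J'/J\<close> is multiplication by \<open>c x\<^sup>a\<close>, since it is
  \<open>S\<close>-linear and homogeneous; hence \<open>J' = (J, x\<^sup>a)\<close> and \<open>Q = J : x\<^sup>a\<close>.\<close>

lemma quot_iso_shift_mono_idealD:
  assumes A: "up_closed A" and A': "up_closed A'" and sub: "A \<subseteq> A'" and Q: "0 \<notin> Q"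
    and iso: "quot_iso_shift (mono_ideal A') (mono_ideal A) (mono_ideal Q :: ('v, 'k::field) mpoly set)"
  shows "\<exists>a. A' = A \<union> multiples a \<and> colon A a = Q"
proof -
  from iso obtain a and phi :: "('v, 'k) mpoly \<Rightarrow> ('v, 'k) mpoly" where
    linear: "\<forall>s f. phi (s * f) = s * phi f" and
    homog: "\<forall>m. \<exists>c. phi (monom m) = Poly_Mapping.single (m + a) c" and
    into: "\<forall>f. phi f \<in> mono_ideal A'" and
    onto: "\<forall>h\<in>mono_ideal A'. \<exists>f. h - phi f \<in> mono_ideal A" and
    kernel: "\<forall>f. phi f \<in> mono_ideal A \<longleftrightarrow> f \<in> mono_ideal Q"
    unfolding quot_iso_shift_def by blast
  obtain c where "phi (monom 0) = Poly_Mapping.single (0 + a) c" using homog by blast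
  then have phi1: "phi 1 = Poly_Mapping.single a c" by (simp add: monom_def)
  have phi: "phi f = Poly_Mapping.single a c * f" for f
    using linear phi1 by (metis mult.commute mult.right_neutral)
  have c: "c \<noteq> 0"
  proof
    assume "c = 0"
    then have "phi (monom 0) \<in> mono_ideal A" by (simp add: phi mono_ideal_def)
    then show False using kernel Q by simp
  qed
  have keys_phi: "Poly_Mapping.keys (phi f) = (+) a ` Poly_Mapping.keys f" for f
    using keys_single_mult[OF c] by (simp add: phi)
  have "d \<in> Q \<longleftrightarrow> d \<in> colon A a" for d
    using kernel[rule_format, of "monom d"] by (simp add: keys_phi mono_ideal_def colon_def)
  then have colon: "colon A a = Q" by blast
  have "a \<in> A'" using into[rule_format, of 1] by (simp add: keys_phi mono_ideal_def)
  then have "A \<union> multiples a \<subseteq> A'" using sub A' up_closedD by blast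
  moreover have "A' \<subseteq> A \<union> multiples a"
  proof
    fix d assume "d \<in> A'"
    then obtain f where f: "monom d - phi f \<in> mono_ideal A" using onto by fastforce
    show "d \<in> A \<union> multiples a"
    proof (rule ccontr)
      assume d: "d \<notin> A \<union> multiples a"
      then have "d \<notin> Poly_Mapping.keys (phi f)" by (auto simp: keys_phi add_in_multiples)
      then have "d \<in> Poly_Mapping.keys (monom d - phi f)"
        by (simp add: in_keys_iff lookup_minus monom_def)
      then show False using f d by (auto simp: mono_ideal_def)
    qed
  qed
  ultimately show ?thesis using colon by blast
qed

subsection \<open>Monomial prime ideals\<close>

text \<open>The library provides no zero divisors only for linearly ordered exponent monoids;
  polynomials over a countable set of variables are reached by renaming keys along injections.\<close>

definition push_keys :: "('a \<Rightarrow> 'c) \<Rightarrow> ('a \<Rightarrow>\<^sub>0 'b::zero) \<Rightarrow> 'c \<Rightarrow>\<^sub>0 'b" where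
  "push_keys E f = Abs_poly_mapping (\<lambda>k. if k \<in> range E then Poly_Mapping.lookup f (inv E k) else 0)"

lemma lookup_push_keys:
  assumes "inj E"
  shows "Poly_Mapping.lookup (push_keys E f) k = (if k \<in> range E then Poly_Mapping.lookup f (inv E k) else 0)"
proof -
  have "{k. (if k \<in> range E then Poly_Mapping.lookup f (inv E k) else 0) \<noteq> 0} \<subseteq> E ` Poly_Mapping.keys f"
    using assms by (auto simp: in_keys_iff)
  then have "finite {k. (if k \<in> range E then Poly_Mapping.lookup f (inv E k) else 0) \<noteq> 0}"
    by (rule finite_subset) simp
  then have "Poly_Mapping.lookup (push_keys E f) = (\<lambda>k. if k \<in> range E then Poly_Mapping.lookup f (inv E k) else 0)"
    unfolding push_keys_def by (rule Abs_poly_mapping_inverse[OF CollectI])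
  then show ?thesis by simp
qed

lemma lookup_push_keys_image: "inj E \<Longrightarrow> Poly_Mapping.lookup (push_keys E f) (E x) = Poly_Mapping.lookup f x"
  by (simp add: lookup_push_keys)

lemma push_keys_eq_0_iff: "inj E \<Longrightarrow> push_keys E f = 0 \<longleftrightarrow> f = 0"
  by (metis lookup_push_keys lookup_push_keys_image lookup_zero poly_mapping_eqI)

lemma inj_push_keys: "inj E \<Longrightarrow> inj (push_keys E)"
  by (rule injI, rule poly_mapping_eqI) (metis lookup_push_keys_image)

lemma push_keys_add:
  "inj E \<Longrightarrow> push_keys E (f + g) = push_keys E f + push_keys E (g :: 'a \<Rightarrow>\<^sub>0 'b::monoid_add)"
  by (rule poly_mapping_eqI) (simp add: lookup_push_keys lookup_add)

lemma push_keys_sum: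
  "inj E \<Longrightarrow> push_keys E (sum h A) = (\<Sum>i\<in>A. push_keys E (h i :: 'a \<Rightarrow>\<^sub>0 'b::comm_monoid_add))"
  by (induction A rule: infinite_finite_induct) (simp_all add: push_keys_add push_keys_eq_0_iff)

lemma push_keys_single: "inj E \<Longrightarrow> push_keys E (Poly_Mapping.single x c) = Poly_Mapping.single (E x) c"
  by (rule poly_mapping_eqI) (auto simp: lookup_push_keys lookup_single when_def dest: injD, metis rangeI)

lemma push_keys_mult:
  fixes f g :: "'a::monoid_add \<Rightarrow>\<^sub>0 'b::semiring_0"
  assumes E: "inj E" and add: "\<And>x y. E (x + y) = E x + E y"
  shows "push_keys E (f * g) = push_keys E f * push_keys E g"
proof -
  have push: "push_keys E p = (\<Sum>d\<in>Poly_Mapping.keys p. Poly_Mapping.single (E d) (Poly_Mapping.lookup p d))"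
    for p :: "'a \<Rightarrow>\<^sub>0 'b"
  proof -
    have "push_keys E p = push_keys E (\<Sum>d\<in>Poly_Mapping.keys p. Poly_Mapping.single d (Poly_Mapping.lookup p d))"
      by (simp flip: poly_mapping_expansion)
    then show ?thesis by (simp add: push_keys_sum push_keys_single E)
  qed
  have "f * g = (\<Sum>d\<in>Poly_Mapping.keys f. Poly_Mapping.single d (Poly_Mapping.lookup f d)) *
      (\<Sum>e\<in>Poly_Mapping.keys g. Poly_Mapping.single e (Poly_Mapping.lookup g e))"
    by (simp flip: poly_mapping_expansion)
  also have "\<dots> = (\<Sum>d\<in>Poly_Mapping.keys f. \<Sum>e\<in>Poly_Mapping.keys g.
      Poly_Mapping.single (d + e) (Poly_Mapping.lookup f d * Poly_Mapping.lookup g e))"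
    by (simp add: sum_product mult_single)
  finally have "push_keys E (f * g) = (\<Sum>d\<in>Poly_Mapping.keys f. \<Sum>e\<in>Poly_Mapping.keys g.
      Poly_Mapping.single (E d + E e) (Poly_Mapping.lookup f d * Poly_Mapping.lookup g e))"
    by (simp add: push_keys_sum push_keys_single E add)
  also have "\<dots> = push_keys E f * push_keys E g"
    by (simp add: push sum_product mult_single)
  finally show ?thesis .
qed

lemma mult_eq_0_if_embedding:
  fixes E :: "'a::monoid_add \<Rightarrow> 'c::{ordered_cancel_comm_monoid_add, linorder}"
    and f g :: "'a \<Rightarrow>\<^sub>0 'b::semiring_no_zero_divisors"
  assumes "inj E" and "\<And>x y. E (x + y) = E x + E y" and "f * g = 0"
  shows "f = 0 \<or> g = 0"
proof -
  have "push_keys E f * push_keys E g = 0"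
    using assms by (simp add: push_keys_mult[symmetric] push_keys_eq_0_iff)
  then show ?thesis using assms(1) by (simp add: push_keys_eq_0_iff)
qed

lemma mpoly_mult_eq_0_iff: "(f :: ('v::countable, 'k::idom) mpoly) * g = 0 \<longleftrightarrow> f = 0 \<or> g = 0"
proof
  assume "f * g = 0"
  show "f = 0 \<or> g = 0"
  proof (rule mult_eq_0_if_embedding)
    show "inj (push_keys (to_nat :: 'v \<Rightarrow> nat))" by (rule inj_push_keys) simp
    show "push_keys to_nat (x + y) = push_keys to_nat x + push_keys to_nat y" for x y :: "'v deg"
      by (rule push_keys_add) simp
  qed fact
qed auto

lemma add_in_var_multiples_iff:
  "d + e \<in> var_multiples W \<longleftrightarrow> d \<in> var_multiples W \<or> e \<in> var_multiples W"
  by (auto simp: var_multiples_def lookup_add)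

lemma is_prime_ideal_var_multiples:
  "is_prime_ideal (mono_ideal (var_multiples W) :: ('v::countable, 'k::idom) mpoly set)"
proof -
  let ?V = "var_multiples W" and ?P = "mono_ideal (var_multiples W) :: ('v, 'k) mpoly set"
  have P: "is_ideal ?P" by (rule is_ideal_mono_ideal[OF up_closed_var_multiples])
  have "1 \<notin> ?P" by (simp add: mono_ideal_def var_multiples_def)
  moreover have "f \<in> ?P \<or> g \<in> ?P" if fg: "f * g \<in> ?P" for f g :: "('v, 'k) mpoly"
  proof -
    define f0 where "f0 = restrict_keys (- ?V) f"
    define g0 where "g0 = restrict_keys (- ?V) g"
    define f1 where "f1 = restrict_keys ?V f"
    define g1 where "g1 = restrict_keys ?V g"
    have split: "f = f1 + f0" "g = g1 + g0"
      by (simp_all add: f0_def f1_def g0_def g1_def restrict_keys_add_compl)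
    have V: "f1 \<in> ?P" "g1 \<in> ?P"
      by (simp_all add: f1_def g1_def mono_ideal_def keys_restrict_keys)
    from P have add: "\<And>x y. x \<in> ?P \<Longrightarrow> y \<in> ?P \<Longrightarrow> x + y \<in> ?P"
      and mult: "\<And>s x. x \<in> ?P \<Longrightarrow> s * x \<in> ?P" by (simp_all add: is_ideal_def)
    have "f * g + (- g) * f1 + (- f0) * g1 \<in> ?P" by (rule add[OF add[OF fg mult[OF V(1)]] mult[OF V(2)]])
    moreover have "f * g + (- g) * f1 + (- f0) * g1 = f0 * g0"
      by (simp add: split algebra_simps)
    ultimately have "f0 * g0 \<in> ?P" by simp
    moreover have "Poly_Mapping.keys (f0 * g0) \<inter> ?V = {}"
    proof -
      have "x + y \<notin> ?V" if "x \<in> Poly_Mapping.keys f0" "y \<in> Poly_Mapping.keys g0" for x y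
        using that by (simp add: f0_def g0_def keys_restrict_keys add_in_var_multiples_iff)
      then show ?thesis using keys_mult[of f0 g0] by blast
    qed
    ultimately have "Poly_Mapping.keys (f0 * g0) = {}" unfolding mono_ideal_def by blast
    then have "f0 * g0 = 0" by simp
    then have "f0 = 0 \<or> g0 = 0" by (simp add: mpoly_mult_eq_0_iff)
    then show ?thesis using split V by auto
  qed
  ultimately show ?thesis using P by (auto simp: is_prime_ideal_def)
qed

lemma prime_ideal_prod_list:
  "is_prime_ideal P \<Longrightarrow> prod_list xs \<in> P \<Longrightarrow> \<exists>x\<in>set xs. x \<in> P"
proof (induction xs)
  case Nil
  then show ?case by (metis is_prime_ideal_def is_ideal_def UNIV_eq_I mult.right_neutral prod_list.Nil)
qed (auto simp: is_prime_ideal_def)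

lemma monom_deg_of_list:
  "monom (deg_of_list ys) = (\<Prod>y\<leftarrow>ys. monom (Poly_Mapping.single y 1) :: ('v, 'k::comm_ring_1) mpoly)"
proof (induction ys)
  case Nil
  then show ?case by (simp add: monom_def)
next
  case (Cons y ys)
  then show ?case by (simp add: monom_mult[symmetric])
qed

lemma var_multiples_if_prime:
  assumes Q: "up_closed Q" and P: "is_prime_ideal (mono_ideal Q :: ('v, 'k::comm_ring_1) mpoly set)"
  shows "Q = var_multiples {v. Poly_Mapping.single v 1 \<in> Q}"
proof
  show "var_multiples {v. Poly_Mapping.single v 1 \<in> Q} \<subseteq> Q"
    using Q by (auto simp: var_multiples_def multiples_def lookup_single when_def intro: up_closedD)
  show "Q \<subseteq> var_multiples {v. Poly_Mapping.single v 1 \<in> Q}"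
  proof
    fix d assume "d \<in> Q"
    obtain ys where ys: "deg_of_list ys = d" "set ys \<subseteq> Poly_Mapping.keys d"
      using ex_deg_of_list[of d] by blast
    have "(monom d :: ('v, 'k) mpoly) \<in> mono_ideal Q" using \<open>d \<in> Q\<close> by simp
    then have "(\<Prod>y\<leftarrow>ys. monom (Poly_Mapping.single y 1)) \<in> (mono_ideal Q :: ('v, 'k) mpoly set)"
      by (simp only: ys(1)[symmetric] monom_deg_of_list)
    then obtain y where "y \<in> set ys" "(monom (Poly_Mapping.single y 1) :: ('v, 'k) mpoly) \<in> mono_ideal Q"
      using prime_ideal_prod_list[OF P] by fastforce
    then show "d \<in> var_multiples {v. Poly_Mapping.single v 1 \<in> Q}"
      using ys(2) by (auto simp: var_multiples_def in_keys_iff intro!: exI[of _ y])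
  qed
qed

subsection \<open>Pretty clean filtrations of monomial ideals\<close>

definition adjoin_steps :: "'v deg set \<Rightarrow> ('v deg \<times> 'v set) list \<Rightarrow> 'v deg set" where
  "adjoin_steps A xs = A \<union> (\<Union>p\<in>set xs. multiples (fst p))"

lemma adjoin_steps_Cons: "adjoin_steps A (p # xs) = adjoin_steps (A \<union> multiples (fst p)) xs"
  by (auto simp: adjoin_steps_def)

lemma adjoin_steps_take_Suc:
  "j < length xs \<Longrightarrow> adjoin_steps A (take (Suc j) xs) = adjoin_steps A (take j xs) \<union> multiples (fst (xs ! j))"
  by (auto simp: adjoin_steps_def take_Suc_conv_app_nth)

lemma up_closed_adjoin_steps: "up_closed A \<Longrightarrow> up_closed (adjoin_steps A xs)"
  unfolding adjoin_steps_def by (intro up_closed_Un up_closed_UN up_closed_multiples)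

lemma deg_filtration_drop:
  "deg_filtration A xs \<Longrightarrow> k \<le> length xs \<Longrightarrow> deg_filtration (adjoin_steps A (take k xs)) (drop k xs)"
proof (induction xs arbitrary: A k)
  case (Cons p xs)
  obtain a W where p: "p = (a, W)" by (cases p)
  show ?case
  proof (cases k)
    case 0
    then show ?thesis using Cons.prems by (simp add: adjoin_steps_def)
  next
    case (Suc k')
    then have "deg_filtration (adjoin_steps (A \<union> multiples a) (take k' xs)) (drop k' xs)"
      using Cons p by simp
    then show ?thesis using Suc p by (simp add: adjoin_steps_Cons)
  qed
qed (simp add: adjoin_steps_def)

lemma deg_filtration_nth:
  assumes "deg_filtration A xs" "j < length xs"
  shows "colon (adjoin_steps A (take j xs)) (fst (xs ! j)) = var_multiples (snd (xs ! j))"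
proof -
  have "drop j xs = xs ! j # drop (Suc j) xs" using assms(2) by (simp add: Cons_nth_drop_Suc)
  then show ?thesis using deg_filtration_drop[OF assms(1), of j] assms(2) by (cases "xs ! j") simp
qed

lemma pretty_clean_mono_idealI:
  assumes U: "up_closed U" and pc: "deg_pretty_clean U"
  shows "pretty_clean (mono_ideal U :: ('v::countable, 'k::field) mpoly set)"
proof -
  obtain xs where xs: "deg_filtration U xs" "pretty_clean_steps xs"
    using pc unfolding deg_pretty_clean_def by blast
  define r where "r = length xs"
  define Us where "Us k = adjoin_steps U (take k xs)" for k
  define Is :: "('v, 'k) mpoly set list" where "Is = map (\<lambda>k. mono_ideal (Us k)) [0..<Suc r]"
  define Ps :: "('v, 'k) mpoly set list" where "Ps = map (\<lambda>p. mono_ideal (var_multiples (snd p))) xs"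
  have Is: "Is ! k = mono_ideal (Us k)" if "k \<le> r" for k
    using that unfolding Is_def by (simp del: upt_Suc add: nth_map)
  have Ps: "Ps ! k = mono_ideal (var_multiples (snd (xs ! k)))" if "k < r" for k
    using that unfolding Ps_def r_def by simp
  have Us: "up_closed (Us k)" for k unfolding Us_def by (rule up_closed_adjoin_steps[OF U])
  have step: "Is ! j \<subseteq> Is ! Suc j \<and> quot_iso_shift (Is ! Suc j) (Is ! j) (Ps ! j)" if j: "j < r" for j
  proof -
    obtain a W where aW: "xs ! j = (a, W)" by (cases "xs ! j")
    have "colon (Us j) a = var_multiples W"
      using deg_filtration_nth[OF xs(1), of j] j aW by (simp add: Us_def r_def)
    moreover have "Us (Suc j) = Us j \<union> multiples a"
      using adjoin_steps_take_Suc[of j xs U] j aW by (simp add: Us_def r_def)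
    ultimately show ?thesis
      using quot_iso_shift_adjoin[OF Us, of j a, where 'k='k] Is[of j] Is[of "Suc j"] Ps[of j] j aW
      by (simp add: mono_ideal_subset_iff)
  qed
  have lengths: "length Is = length Ps + 1" "length Ps = r"
    by (simp_all add: Is_def Ps_def r_def)
  have "Is ! 0 = mono_ideal U" using Is[of 0] by (simp add: Us_def adjoin_steps_def)
  moreover have "Is ! length Ps = UNIV"
    using deg_filtration_drop[OF xs(1), of r] Is[of r] lengths by (simp add: Us_def r_def mono_ideal_UNIV)
  moreover have "monomial_ideal (Is ! j)" if "j < length Is" for j
    using Is[of j] Us[of j] that lengths by (auto simp: monomial_ideal_iff)
  moreover have "is_prime_ideal (Ps ! j) \<and> monomial_ideal (Ps ! j)" if "j < length Ps" for j
    using Ps[of j] that lengths is_prime_ideal_var_multiples up_closed_var_multiples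
    by (auto simp: monomial_ideal_iff)
  moreover have "Ps ! i = Ps ! j" if "i < j" "j < length Ps" "Ps ! i \<subseteq> Ps ! j" for i j
  proof -
    have "\<not> snd (xs ! i) \<subset> snd (xs ! j)"
      using xs(2) that lengths by (simp add: pretty_clean_steps_def sorted_wrt_iff_nth_less r_def)
    then show ?thesis using that Ps[of i] Ps[of j] lengths
      by (auto simp: mono_ideal_subset_iff var_multiples_subset_iff)
  qed
  ultimately have "pretty_clean_filtration (mono_ideal U) Is Ps"
    unfolding pretty_clean_filtration_def prime_filtration_def using lengths step by auto
  then show ?thesis unfolding pretty_clean_def by blast
qed

lemma deg_filtration_upt:
  assumes "Us r = UNIV"
    and "\<And>j. j < r \<Longrightarrow> Us (Suc j) = Us j \<union> multiples (as j) \<and> colon (Us j) (as j) = var_multiples (Ws j)"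
  shows "deg_filtration (Us 0) (map (\<lambda>j. (as j, Ws j)) [0..<r])"
proof -
  have "deg_filtration (Us k) (map (\<lambda>j. (as j, Ws j)) [k..<r])" if "k \<le> r" for k
    using that
  proof (induction k rule: inc_induct)
    case base
    then show ?case using assms(1) by simp
  next
    case (step k)
    then show ?case using assms(2)[of k] by (simp add: upt_conv_Cons)
  qed
  then show ?thesis by simp
qed

lemma monomial_idealD:
  "monomial_ideal (J :: ('v, 'k::comm_ring_1) mpoly set) \<Longrightarrow>
    up_closed {d. monom d \<in> J} \<and> J = mono_ideal {d. monom d \<in> J}"
  by (auto simp: monomial_ideal_iff)

lemma prime_filtration_stepD:
  assumes A: "up_closed A" and A': "up_closed A'" and sub: "A \<subseteq> A'"
    and P: "is_prime_ideal P" "monomial_ideal P"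
    and iso: "quot_iso_shift (mono_ideal A') (mono_ideal A) (P :: ('v, 'k::field) mpoly set)"
  shows "\<exists>a W. P = mono_ideal (var_multiples W) \<and> A' = A \<union> multiples a \<and> colon A a = var_multiples W"
proof -
  obtain Q where Q: "up_closed Q" "P = mono_ideal Q" using P(2) by (auto simp: monomial_ideal_iff)
  define W where "W = {v. Poly_Mapping.single v 1 \<in> Q}"
  have QW: "Q = var_multiples W"
    unfolding W_def using var_multiples_if_prime Q P(1) by blast
  have "0 \<notin> Q" by (simp add: QW var_multiples_def)
  then obtain a where "A' = A \<union> multiples a" "colon A a = Q"
    using quot_iso_shift_mono_idealD[OF A A' sub] iso Q(2) by blast
  then show ?thesis using Q(2) QW by (intro exI[of _ a] exI[of _ W]) simp
qed

lemma deg_pretty_cleanI: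
  assumes U: "up_closed U" and pc: "pretty_clean (mono_ideal U :: ('v, 'k::field) mpoly set)"
  shows "deg_pretty_clean U"
proof -
  obtain Is Ps where F: "pretty_clean_filtration (mono_ideal U :: ('v, 'k) mpoly set) Is Ps"
    using pc unfolding pretty_clean_def by blast
  define r where "r = length Ps"
  have lI: "length Is = Suc r" and I0: "Is ! 0 = mono_ideal U" and Ir: "Is ! r = UNIV"
    and mI: "\<forall>j<length Is. monomial_ideal (Is ! j)"
    and pP: "\<forall>j<r. is_prime_ideal (Ps ! j) \<and> monomial_ideal (Ps ! j)"
    and sP: "\<forall>j<r. Is ! j \<subseteq> Is ! Suc j \<and> quot_iso_shift (Is ! Suc j) (Is ! j) (Ps ! j)"
    and cP: "\<forall>i j. i < j \<and> j < r \<and> Ps ! i \<subseteq> Ps ! j \<longrightarrow> Ps ! i = Ps ! j"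
    using F unfolding pretty_clean_filtration_def prime_filtration_def r_def by auto
  define Us where "Us j = {d. (monom d :: ('v, 'k) mpoly) \<in> Is ! j}" for j
  have Is: "up_closed (Us j) \<and> Is ! j = mono_ideal (Us j)" if "j \<le> r" for j
    using monomial_idealD mI lI that unfolding Us_def by (metis less_Suc_eq_le)
  have "\<exists>a W. Ps ! j = mono_ideal (var_multiples W) \<and> Us (Suc j) = Us j \<union> multiples a
      \<and> colon (Us j) a = var_multiples W" if j: "j < r" for j
  proof -
    have "Is ! j \<subseteq> Is ! Suc j" "quot_iso_shift (Is ! Suc j) (Is ! j) (Ps ! j)"
      "is_prime_ideal (Ps ! j)" "monomial_ideal (Ps ! j)"
      using sP pP j by auto
    then show ?thesis using prime_filtration_stepD[of "Us j" "Us (Suc j)" "Ps ! j"] Is[of j] Is[of "Suc j"] j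
      by (simp add: mono_ideal_subset_iff)
  qed
  then obtain as Ws where step: "\<And>j. j < r \<Longrightarrow> Ps ! j = mono_ideal (var_multiples (Ws j))
      \<and> Us (Suc j) = Us j \<union> multiples (as j) \<and> colon (Us j) (as j) = var_multiples (Ws j)"
    by metis
  define xs where "xs = map (\<lambda>j. (as j, Ws j)) [0..<r]"
  have "mono_ideal (Us 0) = (mono_ideal U :: ('v, 'k) mpoly set)" using Is[of 0] I0 by simp
  moreover have "mono_ideal (Us r) = (mono_ideal UNIV :: ('v, 'k) mpoly set)"
    using Is[of r] Ir by (simp add: mono_ideal_UNIV)
  ultimately have "deg_filtration U xs"
    using deg_filtration_upt[of Us r as Ws] step unfolding xs_def by (simp add: mono_ideal_inject)
  moreover have "pretty_clean_steps xs"
    unfolding pretty_clean_steps_def sorted_wrt_iff_nth_less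
  proof (intro allI impI)
    fix i j assume ij: "i < j" "j < length xs"
    then have r: "i < r" "j < r" by (simp_all add: xs_def)
    have "\<not> Ps ! i \<subset> Ps ! j" using cP ij r by auto
    then have "\<not> Ws i \<subset> Ws j"
      using step[OF r(1)] step[OF r(2)]
      by (simp add: psubset_eq mono_ideal_subset_iff mono_ideal_inject var_multiples_subset_iff
          var_multiples_inject)
    then show "\<not> snd (xs ! i) \<subset> snd (xs ! j)" using r by (simp add: xs_def)
  qed
  ultimately show ?thesis unfolding deg_pretty_clean_def by blast
qed

lemma pretty_clean_mono_ideal_iff:
  "up_closed U \<Longrightarrow> pretty_clean (mono_ideal U :: ('v::countable, 'k::field) mpoly set) \<longleftrightarrow> deg_pretty_clean U"
  using deg_pretty_cleanI pretty_clean_mono_idealI by blast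

lemma regular_on_quot_monomD:
  assumes U: "up_closed U" and reg: "regular_on_quot (monom b) (mono_ideal U :: ('v, 'k::comm_ring_1) mpoly set)"
  shows "colon U b = U" and "b \<noteq> 0"
proof -
  show "colon U b = U"
  proof
    show "colon U b \<subseteq> U"
    proof
      fix d assume "d \<in> colon U b"
      then have "monom b * monom d \<in> (mono_ideal U :: ('v, 'k) mpoly set)"
        by (simp add: monom_mult colon_def)
      then have "(monom d :: ('v, 'k) mpoly) \<in> mono_ideal U"
        using reg unfolding regular_on_quot_def by blast
      then show "d \<in> U" by simp
    qed
  qed (rule up_closed_subset_colon[OF U])
  show "b \<noteq> 0"
  proof
    assume "b = 0"
    then have "multiples b = UNIV" by (simp add: multiples_def)
    then show False
      using reg ideal_gen_insert_monom[OF U, of b, where 'k='k]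
      by (simp add: regular_on_quot_def mono_ideal_UNIV)
  qed
qed

theorem theorem2p1:
  fixes I :: "('v::finite, 'k::field) mpoly set" and u :: "('v, 'k) mpoly"
  assumes "monomial_ideal I"
    and "is_monomial u"
    and "regular_on_quot u I"
  shows "pretty_clean I \<longleftrightarrow> pretty_clean (ideal_gen (I \<union> {u}))"
proof -
  obtain U where U: "up_closed U" "I = mono_ideal U"
    using assms(1) by (auto simp: monomial_ideal_iff)
  obtain b where b: "u = monom b"
    using assms(2) by (auto simp: is_monomial_def)
  have reg: "colon U b = U" "b \<noteq> 0"
    using regular_on_quot_monomD[OF U(1)] assms(3) U(2) b by simp_all
  have gen: "ideal_gen (I \<union> {u}) = mono_ideal (U \<union> multiples b)"
    using ideal_gen_insert_monom[OF U(1)] U(2) b by simp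
  have "deg_pretty_clean U \<longleftrightarrow> deg_pretty_clean (U \<union> multiples b)"
    using deg_pretty_clean_add_regular[OF U(1) reg(1)] deg_pretty_clean_remove_regular[OF U(1) reg] by blast
  then show ?thesis
    unfolding gen using pretty_clean_mono_ideal_iff[OF U(1), where 'k='k]
      pretty_clean_mono_ideal_iff[OF up_closed_Un[OF U(1) up_closed_multiples], of b, where 'k='k]
    by (simp add: U(2))
qed

end
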